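(* Under the standing assumptions below, if $\alpha>5/\sqrt8$, then the inclination angle $\eta(\sigma)=\sigma+\theta(\sigma)$ satisfies $\eta(\sigma)<\pi/2$ for all $\sigma\in(0,\pi/2)$.
   Context: $L^2=L^2(0,\pi/2)$ with norm $\|f\|=\big(\int_0^{\pi/2}|f|^2\big)^{1/2}$. The kernel is $K(s,\sigma)=\log\Big|\frac{\sin(s+\sigma)}{\sin(s-\sigma)}\Big|$ and $(Hw)(\sigma)=\frac1\pi\int_0^{\pi/2}K(s,\sigma)\,w(s)\,ds$. For $\alpha>0$, $\varPhi(\zeta)(\sigma)=\frac{3}{\alpha\pi}\,\frac{\sin(\sigma+\frac13(H\zeta)(\sigma))\cot\sigma}{\exp\int_0^\sigma\zeta\,ds}$, $\sigma\in(0,\pi/2]$. Standing assumptions: $\zeta_*\in L^2$ is a non-negative solution of $\zeta_*=\varPhi(\zeta_* )$ with $\|\zeta_*\|\leqslant\frac{9\sqrt\pi}2$ and $0\le\sigma+\frac13(H\zeta_* )(\sigma)\le\pi$ for $\sigma\in(0,\pi/2)$ (such a solution exists for these $\alpha$), and $\theta=\frac13H\zeta_*$. *)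

theory Defs
  imports "HOL-Analysis.Analysis"
begin

text \<open>Functions on (0,pi/2) are represented as real => real functions; only their
values on [0,pi/2] matter. Integrals are Lebesgue integrals.\<close>

definition kernK :: "real \<Rightarrow> real \<Rightarrow> real" where
  "kernK s \<sigma> = ln \<bar>sin (s + \<sigma>) / sin (s - \<sigma>)\<bar>"

definition opH :: "(real \<Rightarrow> real) \<Rightarrow> real \<Rightarrow> real" where
  "opH w \<sigma> = (1 / pi) * (LINT s:{0..pi/2}|lebesgue. kernK s \<sigma> * w s)"

definition L2norm :: "(real \<Rightarrow> real) \<Rightarrow> real" where
  "L2norm f = sqrt (LINT s:{0..pi/2}|lebesgue. (f s)\<^sup>2)"

definition isL2 :: "(real \<Rightarrow> real) \<Rightarrow> bool" where
  "isL2 f \<longleftrightarrow> f \<in> borel_measurable lebesgue \<and>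
     set_integrable lebesgue {0..pi/2} (\<lambda>s. (f s)\<^sup>2)"

definition Phi :: "real \<Rightarrow> (real \<Rightarrow> real) \<Rightarrow> real \<Rightarrow> real" where
  "Phi \<alpha> \<zeta> \<sigma> = (3 / (\<alpha> * pi)) *
     (sin (\<sigma> + (1/3) * opH \<zeta> \<sigma>) * cot \<sigma>) /
     exp (LINT s:{0..\<sigma>}|lebesgue. \<zeta> s)"

end

theory Submission
  imports Defs "HOL-Real_Asymp.Real_Asymp"
begin

text \<open>
  Since \<open>sin \<le> 1\<close> and \<open>\<zeta> \<ge> 0\<close>, the fixed point equation gives \<open>\<zeta>(s) \<le> 3 cot s / (\<alpha>\<pi>)\<close>.
  The kernel is non-negative, so \<open>\<theta>(\<sigma>) \<le> (1/(\<alpha>\<pi>\<^sup>2)) \<integral> K(s,\<sigma>) cot s ds\<close>, and this integral equals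
  \<open>\<pi>(\<pi>/2 - \<sigma>)\<close>. It is computed by writing \<open>cot s\<close> as an integral over an auxiliary parameter
  \<open>\<beta> \<in> [0, cot \<sigma>]\<close> and swapping the integrals (Tonelli): for fixed \<open>\<beta>\<close> the \<open>s\<close>-integral has an
  elementary primitive in the variable \<open>u = cot \<sigma> tan s\<close>, in which \<open>K(s,\<sigma>) = log\<bar>(u+1)/(u-1)\<bar>\<close>,
  and equals \<open>\<pi>/(1+\<beta>\<^sup>2)\<close>. Hence \<open>\<theta>(\<sigma>) \<le> (\<pi>/2 - \<sigma>)/(\<alpha>\<pi>) < \<pi>/2 - \<sigma>\<close> as soon as \<open>\<alpha>\<pi> > 1\<close>.
\<close>

lemma tan_nonneg: "0 \<le> x \<Longrightarrow> x \<le> pi/2 \<Longrightarrow> 0 \<le> tan x"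
  unfolding tan_def by (intro divide_nonneg_nonneg sin_ge_zero cos_ge_zero) auto

lemma cot_nonneg: "0 \<le> x \<Longrightarrow> x \<le> pi/2 \<Longrightarrow> 0 \<le> cot x"
  unfolding cot_def by (intro divide_nonneg_nonneg sin_ge_zero cos_ge_zero) auto

definition kernL :: "real \<Rightarrow> real" where
  "kernL u = ln \<bar>(u + 1) / (u - 1)\<bar>"

definition kernL_primitive :: "real \<Rightarrow> real \<Rightarrow> real" where
  "kernL_primitive \<beta> u = kernL u * (u^2 - 1) / (2 * (1 + \<beta>^2) * (\<beta>^2 + u^2))
     + arctan (u / \<beta>) / (\<beta> * (1 + \<beta>^2))"

lemma kernL_primitive_tendsto:
  assumes "\<beta> > 0"
  shows "(kernL_primitive \<beta> \<longlongrightarrow> pi / (2 * \<beta> * (1 + \<beta>^2))) at_top"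
proof -
  have "(kernL \<longlongrightarrow> 0) at_top" unfolding kernL_def by real_asymp
  moreover have "((\<lambda>u. (u^2 - 1) / (\<beta>^2 + u^2)) \<longlongrightarrow> 1) at_top"
    using assms by real_asymp
  moreover have "((\<lambda>u. arctan (u / \<beta>)) \<longlongrightarrow> pi / 2) at_top"
    using assms by real_asymp
  ultimately have "((\<lambda>u. kernL u * ((u^2 - 1) / (\<beta>^2 + u^2)) / (2 * (1 + \<beta>^2))
      + arctan (u / \<beta>) / (\<beta> * (1 + \<beta>^2))) \<longlongrightarrow> 0 * 1 / (2 * (1 + \<beta>^2)) + (pi / 2) / (\<beta> * (1 + \<beta>^2))) at_top"
    using assms by (intro tendsto_intros) (auto simp: add_nonneg_eq_0_iff)
  then show ?thesis by (simp add: kernL_primitive_def[abs_def] ac_simps)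
qed

lemma isCont_mult_ln_abs: "isCont (\<lambda>x::real. x * ln \<bar>x\<bar>) x"
proof (cases "x = 0")
  case True
  have "((\<lambda>x::real. x * ln \<bar>x\<bar>) \<longlongrightarrow> 0) (at_left 0)"
    and "((\<lambda>x::real. x * ln \<bar>x\<bar>) \<longlongrightarrow> 0) (at_right 0)"
    by real_asymp+
  then show ?thesis using True by (simp add: isCont_def filterlim_split_at)
qed (auto intro!: continuous_intros)

lemma isCont_mult_ln_abs_compose:
  fixes f :: "real \<Rightarrow> real"
  assumes "isCont f x" shows "isCont (\<lambda>x. f x * ln \<bar>f x\<bar>) x"
  using continuous_at_compose[OF assms isCont_mult_ln_abs] by (simp add: o_def)

text \<open>The factor \<open>u\<^sup>2 - 1\<close> removes the logarithmic singularities of \<open>kernL\<close> at \<open>\<plusminus>1\<close>.\<close>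

lemma isCont_kernL_mult: "isCont (\<lambda>u. kernL u * (u^2 - 1)) u"
proof -
  have "kernL u * (u^2 - 1)
      = (u - 1) * ((u + 1) * ln \<bar>u + 1\<bar>) - (u + 1) * ((u - 1) * ln \<bar>u - 1\<bar>)" for u
    by (cases "u = 1 \<or> u = -1") (auto simp: kernL_def ln_div abs_divide power2_eq_square algebra_simps)
  moreover have "isCont (\<lambda>u. (u - 1) * ((u + 1) * ln \<bar>u + 1\<bar>) - (u + 1) * ((u - 1) * ln \<bar>u - 1\<bar>)) u"
    by (intro continuous_intros isCont_mult_ln_abs_compose)
  ultimately show ?thesis by simp
qed

lemma has_real_derivative_ln_abs:
  assumes "x \<noteq> (0::real)"
  shows "((\<lambda>x. ln \<bar>x\<bar>) has_real_derivative 1 / x) (at x)"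
proof (cases "x > 0")
  case True
  show ?thesis
    by (rule has_field_derivative_transform_within_open[of ln _ _ "{0<..}"])
       (use True in \<open>auto intro!: derivative_eq_intros\<close>)
next
  case False
  with assms have "x < 0" by simp
  have "((\<lambda>x. ln (- x)) has_real_derivative 1 / x) (at x)"
    using \<open>x < 0\<close> by (auto intro!: derivative_eq_intros simp: field_simps)
  then show ?thesis
    by (rule has_field_derivative_transform_within_open[of _ _ _ "{..<0}"])
       (use \<open>x < 0\<close> in auto)
qed

lemma has_real_derivative_kernL:
  assumes "u \<noteq> 1" "u \<noteq> -1"
  shows "(kernL has_real_derivative -2 / (u^2 - 1)) (at u)"
proof (rule has_field_derivative_transform_within_open)
  have "u + 1 \<noteq> 0" "u - 1 \<noteq> 0" using assms by auto
  then have "((\<lambda>u. ln \<bar>u + 1\<bar> - ln \<bar>u + -1\<bar>) has_real_derivative 1 / (u + 1) - 1 / (u + -1)) (at u)"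
    by (intro DERIV_diff has_real_derivative_ln_abs[THEN DERIV_shift[THEN iffD1]]) auto
  moreover have "1 / (u + 1) - 1 / (u - 1) = -2 / (u^2 - 1)"
    using \<open>u + 1 \<noteq> 0\<close> \<open>u - 1 \<noteq> 0\<close> by (simp add: field_simps power2_eq_square)
  ultimately show "((\<lambda>u. ln \<bar>u + 1\<bar> - ln \<bar>u + -1\<bar>) has_real_derivative -2 / (u^2 - 1)) (at u)"
    by simp
  show "open (- {1, -1::real})" by auto
qed (use assms in \<open>auto simp: kernL_def abs_divide ln_div\<close>)

lemma has_real_derivative_arctan_divide:
  assumes "\<beta> > 0"
  shows "((\<lambda>u. arctan (u / \<beta>)) has_real_derivative \<beta> / (\<beta>^2 + u^2)) (at u)"
proof -
  have "((\<lambda>u. arctan (u / \<beta>)) has_real_derivative inverse (1 + (u / \<beta>)^2) * (1 / \<beta>)) (at u)"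
    by (rule DERIV_chain2[OF DERIV_arctan DERIV_cdivide[OF DERIV_ident]])
  moreover have "\<beta>^2 + u^2 > 0" using assms by (simp add: add_pos_nonneg)
  ultimately show ?thesis
    using assms by (simp add: field_simps power2_eq_square)
qed

lemma has_real_derivative_kernL_primitive:
  assumes "\<beta> > 0" "u \<noteq> 1" "u \<noteq> -1"
  shows "(kernL_primitive \<beta> has_real_derivative kernL u * u / (\<beta>^2 + u^2)^2) (at u)"
proof -
  have P: "1 + \<beta>^2 > 0" and D: "\<And>u. \<beta>^2 + u^2 > 0"
    using assms(1) by (auto simp: add_pos_nonneg add_pos_nonneg[OF zero_less_power])
  have "u^2 - 1 \<noteq> 0" using assms(2,3) by (auto simp: power2_eq_1_iff)
  have frac: "(d - p) / (2 * p * d) = (1 / p - 1 / d) / 2" if "p > 0" "d > 0" for p d :: real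
    using that by (simp add: field_simps)
  have partial_fractions: "(u^2 - 1) / (2 * (1 + \<beta>^2) * (\<beta>^2 + u^2))
      = (1 / (1 + \<beta>^2) - 1 / (\<beta>^2 + u^2)) / 2" for u
  proof -
    have "u^2 - 1 = (\<beta>^2 + u^2) - (1 + \<beta>^2)" by simp
    then show ?thesis using frac[OF P D[of u]] by simp
  qed
  have eq: "kernL_primitive \<beta> = (\<lambda>u. kernL u * ((1 / (1 + \<beta>^2) - 1 / (\<beta>^2 + u^2)) / 2)
      + arctan (u / \<beta>) / (\<beta> * (1 + \<beta>^2)))"
    by (auto simp: fun_eq_iff kernL_primitive_def partial_fractions[symmetric])
  have deriv_rational: "((\<lambda>u. (1 / (1 + \<beta>^2) - 1 / (\<beta>^2 + u^2)) / 2)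
      has_real_derivative u / (\<beta>^2 + u^2)^2) (at u)"
    using D[of u] by (auto intro!: derivative_eq_intros simp: power2_eq_square)
  have "\<beta> / d / (\<beta> * p) = 1 / (p * d)" for d p :: real
    using assms(1) by simp
  then have deriv_arctan: "((\<lambda>u. arctan (u / \<beta>) / (\<beta> * (1 + \<beta>^2)))
      has_real_derivative 1 / ((1 + \<beta>^2) * (\<beta>^2 + u^2))) (at u)"
    using DERIV_cdivide[OF has_real_derivative_arctan_divide[OF assms(1)]] by metis
  have "(kernL_primitive \<beta> has_real_derivative
      kernL u * (u / (\<beta>^2 + u^2)^2) + -2 / (u^2 - 1) * ((u^2 - 1) / (2 * (1 + \<beta>^2) * (\<beta>^2 + u^2)))
      + 1 / ((1 + \<beta>^2) * (\<beta>^2 + u^2))) (at u)"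
    unfolding eq partial_fractions
    by (rule DERIV_add[OF DERIV_mult'[OF has_real_derivative_kernL[OF assms(2,3)] deriv_rational]
          deriv_arctan])
  moreover have "-2 / (u^2 - 1) * ((u^2 - 1) / (2 * (1 + \<beta>^2) * (\<beta>^2 + u^2)))
      = - (1 / ((1 + \<beta>^2) * (\<beta>^2 + u^2)))"
  proof -
    have "-2 / a * (a / (2 * b)) = - (1 / b)" if "a \<noteq> 0" for a b :: real
      using that by simp
    from this[OF \<open>u^2 - 1 \<noteq> 0\<close>, of "(1 + \<beta>^2) * (\<beta>^2 + u^2)"] show ?thesis
      by (simp only: mult.assoc)
  qed
  ultimately show ?thesis by simp
qed

lemma isCont_kernL_primitive:
  assumes "\<beta> > 0"
  shows "isCont (kernL_primitive \<beta>) u"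
proof -
  have "2 * (1 + \<beta>^2) * (\<beta>^2 + u^2) \<noteq> 0" "\<beta> * (1 + \<beta>^2) \<noteq> 0"
    using assms by (auto simp: add_nonneg_eq_0_iff)
  then show ?thesis
    unfolding kernL_primitive_def[abs_def]
    by (intro continuous_intros isCont_divide[OF isCont_kernL_mult]) (use assms in auto)
qed

lemma kernK_eq_kernL:
  assumes "0 < \<sigma>" "\<sigma> < pi/2" "0 \<le> s" "s < pi/2"
  shows "kernK s \<sigma> = kernL (cot \<sigma> * tan s)"
proof -
  have "sin \<sigma> > 0" "cos s > 0"
    using assms by (auto intro!: sin_gt_zero cos_gt_zero_pi)
  then have "sin (s + \<sigma>) = (cot \<sigma> * tan s + 1) * (sin \<sigma> * cos s)"
    and "sin (s - \<sigma>) = (cot \<sigma> * tan s - 1) * (sin \<sigma> * cos s)"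
    by (simp_all add: sin_add sin_diff cot_def tan_def field_simps)
  with \<open>sin \<sigma> > 0\<close> \<open>cos s > 0\<close> show ?thesis
    by (simp add: kernK_def kernL_def)
qed

lemma kernL_nonneg:
  assumes "u \<ge> 0"
  shows "kernL u \<ge> 0"
proof (cases "u = 1")
  case False
  with assms have "\<bar>(u + 1) / (u - 1)\<bar> \<ge> 1"
    by (simp add: abs_divide divide_simps)
  then show ?thesis by (simp add: kernL_def)
qed (simp add: kernL_def)

lemma kernK_nonneg:
  assumes "0 < \<sigma>" "\<sigma> < pi/2" "0 \<le> s" "s \<le> pi/2"
  shows "kernK s \<sigma> \<ge> 0"
proof (cases "s = pi/2")
  case True
  have "\<bar>sin (pi/2 + \<sigma>) / sin (pi/2 - \<sigma>)\<bar> = 1"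
    using assms cos_gt_zero[of \<sigma>] by (simp add: sin_add sin_diff)
  then show ?thesis unfolding True kernK_def by simp
next
  case False
  have "cot \<sigma> > 0" using assms by (intro cot_gt_zero)
  moreover have "tan s \<ge> 0" using assms by (intro tan_nonneg)
  ultimately show ?thesis
    using kernK_eq_kernL[OF assms(1-3)] assms False by (simp add: kernL_nonneg)
qed

text \<open>
  With \<open>u = c tan s\<close>, \<open>cot_weight c \<beta> s = 2\<beta> u u'(s) / (\<beta>\<^sup>2 + u\<^sup>2)\<^sup>2\<close>: its \<open>\<beta>\<close>-integral over \<open>[0, c]\<close>
  is \<open>cot s\<close>, and against the kernel its \<open>s\<close>-integral becomes a \<open>u\<close>-integral with primitive
  \<open>2\<beta> kernL_primitive \<beta> u\<close>.
\<close>

definition cot_weight :: "real \<Rightarrow> real \<Rightarrow> real \<Rightarrow> real" where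
  "cot_weight c \<beta> s = 2 * \<beta> * (c * tan s) * (c / (cos s)^2) / (\<beta>^2 + (c * tan s)^2)^2"

lemma cot_weight_nonneg:
  assumes "c > 0" "0 \<le> \<beta>" "0 \<le> s" "s \<le> pi/2"
  shows "cot_weight c \<beta> s \<ge> 0"
  using assms tan_nonneg[of s] unfolding cot_weight_def
  by (intro divide_nonneg_nonneg mult_nonneg_nonneg) auto

lemma has_integral_cot_weight:
  assumes "c > 0" "0 < s" "s < pi/2"
  shows "((\<lambda>\<beta>. cot_weight c \<beta> s) has_integral cot s) {0..c}"
proof -
  define u where "u = c * tan s"
  define A where "A = u * (c / (cos s)^2)"
  have S: "sin s > 0" and C: "cos s > 0"
    using assms by (auto intro!: sin_gt_zero cos_gt_zero_pi)
  have "u > 0" unfolding u_def using assms by (simp add: tan_gt_zero)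
  have "((\<lambda>\<beta>. - A / (\<beta>^2 + u^2)) has_real_derivative cot_weight c \<beta> s) (at \<beta> within {0..c})"
    for \<beta>
  proof -
    have "\<beta>^2 + u^2 > 0" using \<open>u > 0\<close> by (simp add: add_nonneg_pos)
    then have "((\<lambda>\<beta>. - A / (\<beta>^2 + u^2))
        has_real_derivative A * (2 * \<beta>) / (\<beta>^2 + u^2)^2) (at \<beta> within {0..c})"
      by (auto intro!: derivative_eq_intros simp: power2_eq_square field_simps)
    then show ?thesis
      unfolding cot_weight_def A_def u_def by (simp add: algebra_simps)
  qed
  then have "((\<lambda>\<beta>. cot_weight c \<beta> s) has_integral (A / u^2 - A / (c^2 + u^2))) {0..c}"
    using fundamental_theorem_of_calculus[of 0 c "\<lambda>\<beta>. - A / (\<beta>^2 + u^2)"] assms(1)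
    by (simp add: has_real_derivative_iff_has_vector_derivative)
  moreover have "A / u^2 = 1 / (cos s * sin s)"
    using S C assms(1) by (simp add: A_def u_def tan_def field_simps power2_eq_square)
  moreover have "A / (c^2 + u^2) = sin s / cos s"
  proof -
    have "c^2 + u^2 = c^2 / (cos s)^2"
      using C by (simp add: u_def tan_def field_simps) (simp add: distrib_left[symmetric])
    then show ?thesis
      using S C assms(1) by (simp add: A_def u_def tan_def field_simps power2_eq_square)
  qed
  moreover have "1 / (cos s * sin s) - sin s / cos s = cot s"
  proof -
    have "1 / (cos s * sin s) - sin s / cos s = (1 - (sin s)^2) / (cos s * sin s)"
      using S C by (simp add: field_simps power2_eq_square)
    also have "\<dots> = cot s"
      using C by (simp only: cos_squared_eq[symmetric]) (simp add: cot_def power2_eq_square)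
    finally show ?thesis .
  qed
  ultimately show ?thesis by simp
qed

lemma continuous_on_kernL_primitive_tan:
  assumes "c > 0" "\<beta> > 0"
  shows "continuous_on {0..pi/2}
    (\<lambda>s. if s = pi/2 then pi / (1 + \<beta>^2) else 2 * \<beta> * kernL_primitive \<beta> (c * tan s))"
    (is "continuous_on _ ?H")
proof -
  define F where "F s = 2 * \<beta> * kernL_primitive \<beta> (c * tan s)" for s
  have F_cont: "isCont F x" if "cos x \<noteq> 0" for x
    unfolding F_def using that
    by (intro continuous_intros continuous_at_compose[OF _ isCont_kernL_primitive, unfolded o_def]
        \<open>\<beta> > 0\<close>) auto
  have eventually_F_eq_H: "eventually (\<lambda>s. F s = ?H s) (at x within A)" for x A
    by (rule eventually_mono[OF eventually_neq_at_within[of "pi/2"]]) (simp add: F_def)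
  show ?thesis
  proof (rule continuous_on_IccI)
    have "(F \<longlongrightarrow> ?H 0) (at_right 0)"
      using F_cont[of 0] by (simp add: isCont_def F_def filterlim_at_split)
    then show "(?H \<longlongrightarrow> ?H 0) (at_right 0)"
      by (rule Lim_transform_eventually) (rule eventually_F_eq_H)
  next
    have "filterlim (\<lambda>s. c * tan s) at_top (at_left (pi/2))"
      by (rule filterlim_tendsto_pos_mult_at_top[OF tendsto_const \<open>c > 0\<close> filterlim_tan_at_left])
    from filterlim_compose[OF kernL_primitive_tendsto[OF \<open>\<beta> > 0\<close>] this]
    have "(F \<longlongrightarrow> 2 * \<beta> * (pi / (2 * \<beta> * (1 + \<beta>^2)))) (at_left (pi/2))"
      unfolding F_def by (intro tendsto_intros)
    then have "(F \<longlongrightarrow> ?H (pi/2)) (at_left (pi/2))"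
      using \<open>\<beta> > 0\<close> by simp
    then show "(?H \<longlongrightarrow> ?H (pi/2)) (at_left (pi/2))"
      by (rule Lim_transform_eventually) (rule eventually_F_eq_H)
  next
    fix x :: real assume "0 < x" "x < pi/2"
    then have "(F \<longlongrightarrow> ?H x) (at x)"
      using F_cont[of x] cos_gt_zero_pi[of x] by (simp add: isCont_def F_def)
    then show "(?H \<longlongrightarrow> ?H x) (at x)"
      by (rule Lim_transform_eventually) (rule eventually_F_eq_H)
  qed simp
qed

lemma cot_mult_tan_neq_one:
  assumes "0 < \<sigma>" "\<sigma> < pi/2" "0 < x" "x < pi/2" "x \<noteq> \<sigma>"
  shows "cot \<sigma> * tan x \<noteq> 1"
proof
  assume "cot \<sigma> * tan x = 1"
  then have "(cos \<sigma> / sin \<sigma>) * (sin x / cos x) = 1"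
    by (simp only: cot_def tan_def)
  moreover have "sin \<sigma> > 0" "sin x > 0" "cos \<sigma> > 0" "cos x > 0"
    using assms by (auto intro!: sin_gt_zero cos_gt_zero_pi)
  ultimately have "cos \<sigma> * sin x = sin \<sigma> * cos x"
    by (simp add: field_simps)
  then have "sin (x - \<sigma>) = 0" by (simp add: sin_diff mult.commute)
  then have "x - \<sigma> = 0" by (rule sin_eq_0_pi[rotated 2]) (use assms in auto)
  with assms show False by auto
qed

lemma has_real_derivative_kernL_primitive_tan:
  assumes \<sigma>: "0 < \<sigma>" "\<sigma> < pi/2" and x: "0 < x" "x < pi/2" "x \<noteq> \<sigma>" and "\<beta> > 0"
  shows "((\<lambda>s. 2 * \<beta> * kernL_primitive \<beta> (cot \<sigma> * tan s))
    has_real_derivative kernK x \<sigma> * cot_weight (cot \<sigma>) \<beta> x) (at x)"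
proof -
  define u where "u = cot \<sigma> * tan x"
  have "u > 0" unfolding u_def using \<sigma> x by (simp add: cot_gt_zero tan_gt_zero)
  have "u \<noteq> 1" unfolding u_def using \<sigma> x by (rule cot_mult_tan_neq_one)
  have "cos x \<noteq> 0" using x cos_gt_zero_pi[of x] by simp
  have "((\<lambda>s. 2 * \<beta> * kernL_primitive \<beta> (cot \<sigma> * tan s)) has_real_derivative
      2 * \<beta> * (kernL u * u / (\<beta>^2 + u^2)^2 * (cot \<sigma> * inverse ((cos x)^2)))) (at x)"
    unfolding u_def
    by (intro DERIV_cmult
        DERIV_chain2[OF has_real_derivative_kernL_primitive DERIV_cmult[OF DERIV_tan]])
       (use \<open>\<beta> > 0\<close> \<open>u > 0\<close> \<open>u \<noteq> 1\<close> \<open>cos x \<noteq> 0\<close> in \<open>auto simp: u_def\<close>)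
  moreover have "kernK x \<sigma> = kernL u"
    using kernK_eq_kernL[OF \<sigma>, of x] x by (simp add: u_def)
  ultimately show ?thesis
    by (simp add: cot_weight_def divide_inverse mult_ac flip: u_def)
qed

lemma has_integral_kernK_cot_weight:
  assumes \<sigma>: "0 < \<sigma>" "\<sigma> < pi/2" and "\<beta> > 0"
  shows "((\<lambda>s. kernK s \<sigma> * cot_weight (cot \<sigma>) \<beta> s) has_integral pi / (1 + \<beta>^2)) {0..pi/2}"
proof -
  define H where "H s =
    (if s = pi/2 then pi / (1 + \<beta>^2) else 2 * \<beta> * kernL_primitive \<beta> (cot \<sigma> * tan s))" for s
    \<comment> \<open>the continuous extension to \<open>\<pi>/2\<close>, where \<open>tan\<close> only has a junk value\<close>
  have "continuous_on {0..pi/2} H"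
    unfolding H_def using \<sigma> \<open>\<beta> > 0\<close> by (intro continuous_on_kernL_primitive_tan cot_gt_zero)
  moreover have "(H has_vector_derivative kernK x \<sigma> * cot_weight (cot \<sigma>) \<beta> x) (at x)"
    if x: "x \<in> {0<..<pi/2} - {\<sigma>}" for x
  proof -
    have "((\<lambda>s. 2 * \<beta> * kernL_primitive \<beta> (cot \<sigma> * tan s))
        has_real_derivative kernK x \<sigma> * cot_weight (cot \<sigma>) \<beta> x) (at x)"
      using x \<sigma> \<open>\<beta> > 0\<close> by (intro has_real_derivative_kernL_primitive_tan) auto
    then have "(H has_real_derivative kernK x \<sigma> * cot_weight (cot \<sigma>) \<beta> x) (at x)"
      by (rule has_field_derivative_transform_within_open[of _ _ _ "{0<..<pi/2}"])
         (use x in \<open>auto simp: H_def\<close>)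
    then show ?thesis by (simp add: has_real_derivative_iff_has_vector_derivative)
  qed
  ultimately have "((\<lambda>s. kernK s \<sigma> * cot_weight (cot \<sigma>) \<beta> s) has_integral (H (pi/2) - H 0)) {0..pi/2}"
    by (intro fundamental_theorem_of_calculus_interior_strong[of "{\<sigma>}"]) auto
  moreover have "kernL_primitive \<beta> 0 = 0" by (simp add: kernL_primitive_def kernL_def)
  ultimately show ?thesis by (simp add: H_def)
qed

lemma nn_integral_cot_weight:
  assumes "c > 0" "0 \<le> s" "s \<le> pi/2"
  shows "(\<integral>\<^sup>+ \<beta>. ennreal (cot_weight c \<beta> s) * indicator {0..c} \<beta> \<partial>lborel) = ennreal (cot s)"
proof -
  consider "s = 0" | "s = pi/2" | "0 < s" "s < pi/2"
    using assms by fastforce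
  then show ?thesis
  proof cases
    case 1
    then show ?thesis by (simp add: cot_weight_def cot_def)
  next
    case 2
    then show ?thesis unfolding 2 by (simp add: cot_weight_def tan_def cot_def)
  next
    case 3
    with assms show ?thesis
      by (intro nn_integral_has_integral_lebesgue' has_integral_cot_weight cot_weight_nonneg) auto
  qed
qed

lemma nn_integral_kernK_cot_weight_dbeta:
  assumes \<sigma>: "0 < \<sigma>" "\<sigma> < pi/2" and s: "0 \<le> s" "s \<le> pi/2"
  shows "(\<integral>\<^sup>+ \<beta>. ennreal (kernK s \<sigma> * cot_weight (cot \<sigma>) \<beta> s) * indicator {0..cot \<sigma>} \<beta> \<partial>lborel)
    = ennreal (kernK s \<sigma> * cot s)"
proof -
  have "cot \<sigma> > 0" using \<sigma> by (rule cot_gt_zero)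
  have K: "kernK s \<sigma> \<ge> 0" using \<sigma> s by (rule kernK_nonneg)
  have "(\<integral>\<^sup>+ \<beta>. ennreal (kernK s \<sigma> * cot_weight (cot \<sigma>) \<beta> s) * indicator {0..cot \<sigma>} \<beta> \<partial>lborel)
      = (\<integral>\<^sup>+ \<beta>. ennreal (kernK s \<sigma>)
          * (ennreal (cot_weight (cot \<sigma>) \<beta> s) * indicator {0..cot \<sigma>} \<beta>) \<partial>lborel)"
    using K cot_weight_nonneg[OF \<open>cot \<sigma> > 0\<close> _ s]
    by (intro nn_integral_cong) (auto simp: indicator_def ennreal_mult)
  also have "\<dots> = ennreal (kernK s \<sigma>)
      * (\<integral>\<^sup>+ \<beta>. ennreal (cot_weight (cot \<sigma>) \<beta> s) * indicator {0..cot \<sigma>} \<beta> \<partial>lborel)"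
    by (rule nn_integral_cmult) (unfold cot_weight_def tan_def, measurable)
  also have "\<dots> = ennreal (kernK s \<sigma>) * ennreal (cot s)"
    using s by (simp add: nn_integral_cot_weight[OF \<open>cot \<sigma> > 0\<close>])
  finally show ?thesis
    using K cot_nonneg[OF s] by (simp add: ennreal_mult)
qed

lemma nn_integral_kernK_cot_weight:
  assumes "0 < \<sigma>" "\<sigma> < pi/2" "\<beta> > 0"
  shows "(\<integral>\<^sup>+ s. ennreal (kernK s \<sigma> * cot_weight (cot \<sigma>) \<beta> s) * indicator {0..pi/2} s \<partial>lborel)
    = ennreal (pi / (1 + \<beta>^2))"
  using assms cot_gt_zero[OF assms(1,2)]
  by (intro nn_integral_has_integral_lebesgue' has_integral_kernK_cot_weight
      mult_nonneg_nonneg kernK_nonneg cot_weight_nonneg) auto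

lemma nn_integral_kernK_cot:
  assumes \<sigma>: "0 < \<sigma>" "\<sigma> < pi/2"
  shows "(\<integral>\<^sup>+ s. ennreal (kernK s \<sigma> * cot s) * indicator {0..pi/2} s \<partial>lborel)
    = ennreal (pi * (pi/2 - \<sigma>))"
proof -
  define c where "c = cot \<sigma>"
  have "c > 0" unfolding c_def using \<sigma> by (rule cot_gt_zero)
  define f where "f s \<beta> =
      ennreal (kernK s \<sigma> * cot_weight c \<beta> s) * indicator {0..pi/2} s * indicator {0..c} \<beta>" for s \<beta>
  have f_measurable: "(\<lambda>(s, \<beta>). f s \<beta>) \<in> borel_measurable (lborel \<Otimes>\<^sub>M lborel)"
    unfolding f_def kernK_def cot_weight_def tan_def by measurable
  have "(\<integral>\<^sup>+ s. ennreal (kernK s \<sigma> * cot s) * indicator {0..pi/2} s \<partial>lborel)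
      = (\<integral>\<^sup>+ s. (\<integral>\<^sup>+ \<beta>. f s \<beta> \<partial>lborel) \<partial>lborel)"
    using nn_integral_kernK_cot_weight_dbeta[OF \<sigma>]
    by (intro nn_integral_cong) (auto simp: f_def c_def indicator_def)
  also have "\<dots> = (\<integral>\<^sup>+ \<beta>. (\<integral>\<^sup>+ s. f s \<beta> \<partial>lborel) \<partial>lborel)"
    using f_measurable by (rule lborel_pair.Fubini'[symmetric])
  also have "\<dots> = (\<integral>\<^sup>+ \<beta>. ennreal (pi / (1 + \<beta>^2)) * indicator {0..c} \<beta> \<partial>lborel)"
  proof (intro nn_integral_cong_AE eventually_mono[OF AE_lborel_singleton[of 0]])
    fix \<beta> :: real assume "\<beta> \<noteq> 0"
    show "(\<integral>\<^sup>+ s. f s \<beta> \<partial>lborel) = ennreal (pi / (1 + \<beta>^2)) * indicator {0..c} \<beta>"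
    proof (cases "\<beta> \<in> {0..c}")
      case True
      with \<open>\<beta> \<noteq> 0\<close> have "\<beta> > 0" by auto
      with True show ?thesis
        using nn_integral_kernK_cot_weight[OF \<sigma> \<open>\<beta> > 0\<close>] by (simp add: f_def c_def)
    qed (simp add: f_def)
  qed
  also have "\<dots> = ennreal (pi * arctan c - pi * arctan 0)"
    using \<open>c > 0\<close>
    by (intro nn_integral_has_integral_lebesgue' fundamental_theorem_of_calculus)
       (auto intro!: derivative_eq_intros simp: has_real_derivative_iff_has_vector_derivative[symmetric]
         divide_inverse add_pos_nonneg)
  also have "arctan c = pi/2 - \<sigma>"
    unfolding c_def tan_cot'[symmetric] using \<sigma> by (intro arctan_tan) auto
  finally show ?thesis by simp
qed

lemma opH_le_of_le_cot:
  assumes w: "w \<in> borel_measurable lebesgue"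
    and bound: "AE s in lebesgue. s \<in> {0..pi/2} \<longrightarrow> 0 \<le> w s \<and> w s \<le> C * cot s"
    and "C \<ge> 0" and \<sigma>: "0 < \<sigma>" "\<sigma> < pi/2"
  shows "opH w \<sigma> \<le> C * (pi/2 - \<sigma>)"
proof -
  define g where "g s = indicator {0..pi/2} s * (kernK s \<sigma> * w s)" for s
  have K: "kernK s \<sigma> \<ge> 0" if "s \<in> {0..pi/2}" for s
    using kernK_nonneg[OF \<sigma>] that by auto
  have [measurable]: "(\<lambda>s. kernK s \<sigma>) \<in> borel_measurable lebesgue"
    by (rule measurable_completion) (unfold kernK_def, measurable)
  have [measurable]: "{0..pi/2::real} \<in> sets lebesgue"
    by (rule sets_completionI_sets) simp
  have g_measurable: "g \<in> borel_measurable lebesgue"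
    unfolding g_def using w by measurable
  have g_nonneg: "AE s in lebesgue. 0 \<le> g s"
    by (rule eventually_mono[OF bound]) (auto simp: g_def indicator_def K)
  have "(\<integral>\<^sup>+ s. ennreal (g s) \<partial>lebesgue)
      \<le> (\<integral>\<^sup>+ s. ennreal C * (ennreal (kernK s \<sigma> * cot s) * indicator {0..pi/2} s) \<partial>lebesgue)"
  proof (intro nn_integral_mono_AE eventually_mono[OF bound])
    fix s assume "s \<in> {0..pi/2} \<longrightarrow> 0 \<le> w s \<and> w s \<le> C * cot s"
    show "ennreal (g s) \<le> ennreal C * (ennreal (kernK s \<sigma> * cot s) * indicator {0..pi/2} s)"
    proof (cases "s \<in> {0..pi/2}")
      case True
      with \<open>s \<in> {0..pi/2} \<longrightarrow> _\<close> have "g s \<le> C * (kernK s \<sigma> * cot s)"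
        using mult_left_mono[of "w s" "C * cot s" "kernK s \<sigma>"] K[of s]
        by (simp add: g_def mult.left_commute)
      with True \<open>C \<ge> 0\<close> show ?thesis
        by (simp add: ennreal_mult'[symmetric] ennreal_leI)
    qed (simp add: g_def)
  qed
  also have "\<dots>
      = ennreal C * (\<integral>\<^sup>+ s. ennreal (kernK s \<sigma> * cot s) * indicator {0..pi/2} s \<partial>lborel)"
    unfolding nn_integral_completion
    by (rule nn_integral_cmult) (unfold kernK_def cot_def, measurable)
  also have "\<dots> = ennreal (C * (pi * (pi/2 - \<sigma>)))"
    using nn_integral_kernK_cot[OF \<sigma>] \<open>C \<ge> 0\<close> \<sigma> by (simp add: ennreal_mult)
  finally have "integral\<^sup>L lebesgue g \<le> C * (pi * (pi/2 - \<sigma>))"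
    using \<open>C \<ge> 0\<close> \<sigma>
    by (simp add: integral_eq_nn_integral[OF g_measurable g_nonneg] enn2real_leI)
  moreover have "opH w \<sigma> = integral\<^sup>L lebesgue g / pi"
    unfolding opH_def g_def set_lebesgue_integral_def by simp
  ultimately show ?thesis by (simp add: divide_le_eq mult_ac)
qed

lemma fixed_point_le_cot:
  fixes \<zeta> :: "real \<Rightarrow> real"
  assumes "\<alpha> > 0"
    and nonneg: "AE s in lebesgue. s \<in> {0..pi/2} \<longrightarrow> \<zeta> s \<ge> 0"
    and fixpt: "AE \<sigma> in lebesgue. \<sigma> \<in> {0<..pi/2} \<longrightarrow> \<zeta> \<sigma> = Phi \<alpha> \<zeta> \<sigma>"
  shows "AE s in lebesgue. s \<in> {0..pi/2} \<longrightarrow> 0 \<le> \<zeta> s \<and> \<zeta> s \<le> 3 / (\<alpha> * pi) * cot s"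
  using AE_completion[OF AE_lborel_singleton[of 0]] nonneg fixpt
proof eventually_elim
  case (elim s)
  show ?case
  proof
    assume s: "s \<in> {0..pi/2}"
    define C where "C = 3 / (\<alpha> * pi)"
    define E where "E = exp (LINT x:{0..s}|lebesgue. \<zeta> x)"
    have "C > 0" using \<open>\<alpha> > 0\<close> by (simp add: C_def)
    have "cot s \<ge> 0" using s by (intro cot_nonneg) auto
    have "(LINT x:{0..s}|lebesgue. \<zeta> x) \<ge> 0"
      unfolding set_lebesgue_integral_def
      by (intro integral_nonneg_AE eventually_mono[OF nonneg])
         (use s in \<open>auto simp: indicator_def\<close>)
    then have "E \<ge> 1" by (simp add: E_def)
    have "C * (sin (s + (1/3) * opH \<zeta> s) * cot s) \<le> C * cot s"
      using \<open>C > 0\<close> \<open>cot s \<ge> 0\<close> mult_right_mono[OF sin_le_one \<open>cot s \<ge> 0\<close>] by simp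
    then have "C * (sin (s + (1/3) * opH \<zeta> s) * cot s) / E \<le> C * cot s / E"
      using \<open>E \<ge> 1\<close> by (simp add: divide_right_mono)
    also have "\<dots> \<le> C * cot s"
      using \<open>E \<ge> 1\<close> \<open>C > 0\<close> \<open>cot s \<ge> 0\<close> mult_left_mono[of 1 E "C * cot s"]
      by (simp add: divide_le_eq)
    finally show "0 \<le> \<zeta> s \<and> \<zeta> s \<le> C * cot s"
      using elim s by (simp add: Phi_def C_def E_def)
  qed
qed

theorem theorem4p7:
  fixes \<alpha> :: real and \<zeta> :: "real \<Rightarrow> real"
  assumes alpha_pos: "\<alpha> > 0"
    and L2: "isL2 \<zeta>"
    and nonneg: "AE s in lebesgue. s \<in> {0..pi/2} \<longrightarrow> \<zeta> s \<ge> 0"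
    and fixpt: "AE \<sigma> in lebesgue. \<sigma> \<in> {0<..pi/2} \<longrightarrow> \<zeta> \<sigma> = Phi \<alpha> \<zeta> \<sigma>"
    and norm_bd: "L2norm \<zeta> \<le> 9 * sqrt pi / 2"
    and range: "\<forall>\<sigma>\<in>{0<..<pi/2}. 0 \<le> \<sigma> + (1/3) * opH \<zeta> \<sigma> \<and> \<sigma> + (1/3) * opH \<zeta> \<sigma> \<le> pi"
    and alpha_big: "\<alpha> > 5 / sqrt 8"
  shows "\<forall>\<sigma>\<in>{0<..<pi/2}. \<sigma> + (1/3) * opH \<zeta> \<sigma> < pi / 2"
proof
  fix \<sigma> :: real assume "\<sigma> \<in> {0<..<pi/2}"
  then have \<sigma>: "0 < \<sigma>" "\<sigma> < pi/2" by auto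
  have "opH \<zeta> \<sigma> \<le> 3 / (\<alpha> * pi) * (pi/2 - \<sigma>)"
    using L2 alpha_pos
    by (intro opH_le_of_le_cot fixed_point_le_cot[OF alpha_pos nonneg fixpt] \<sigma>)
       (auto simp: isL2_def)
  then have "(1/3) * opH \<zeta> \<sigma> \<le> (pi/2 - \<sigma>) / (\<alpha> * pi)"
    by (simp add: mult_ac)
  moreover have "\<alpha> * pi > 1"
  proof -
    have "sqrt 8 < (5::real)" by (rule real_less_lsqrt) auto
    then have "5 / sqrt 8 > (1::real)" by (simp add: less_divide_eq)
    then have "\<alpha> > 1" using alpha_big by linarith
    then show ?thesis using pi_gt3 by (simp add: less_1_mult)
  qed
  then have "(pi/2 - \<sigma>) / (\<alpha> * pi) < pi/2 - \<sigma>"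
    using \<sigma> by (simp add: divide_less_eq)
  ultimately show "\<sigma> + (1/3) * opH \<zeta> \<sigma> < pi / 2"
    by linarith
qed

end
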